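(* Let $\Omega$, $\Upsilon$, $\Gamma$ be finite sets, $n=|\Omega|$, and let $f\colon\Omega\to\Upsilon$ and $g\colon\Omega\to\Gamma$ be surjective. Let $V_\Omega=\mathbb{R}^\Omega$, let $V_\Upsilon\le V_\Omega$ be the subspace of vectors $v$ with $v(\omega)$ depending only on $f(\omega)$, and $V_\Gamma\le V_\Omega$ the subspace of vectors with $v(\omega)$ depending only on $g(\omega)$. Let $\mathcal{P}$, $\mathcal{Q}$, $\mathcal{R}$ be orthogonal decompositions of $V_\Omega$, $V_\Upsilon$, $V_\Gamma$, respectively, each containing the matrix $\mathbf{P}_0=\mathbf{Q}_0=\mathbf{R}_0=n^{-1}\mathbf{J}$. Write $\mathbf{I}_{\mathcal{Q}}=\sum_{\mathbf{Q}\in\mathcal{Q}}\mathbf{Q}$ and $\mathbf{I}_{\mathcal{R}}=\sum_{\mathbf{R}\in\mathcal{R}}\mathbf{R}$. Suppose $\mathcal{Q}$ is structure balanced in relation to $\mathcal{P}$, and let $\mathbf{P}\in\mathcal{P}\setminus\{\mathbf{P}_0\}$. Then the following are equivalent: (i) $(\mathbf{P}\vartriangleright\mathbf{Q})\mathbf{I}_{\mathcal{R}}=\mathbf{0}$ for all $\mathbf{Q}\in\mathcal{Q}$ with $\lambda_{\mathbf{PQ}}\neq0$; (ii) $\mathbf{QPR}=\mathbf{0}$ for all $\mathbf{Q}\in\mathcal{Q}$ and all $\mathbf{R}\in\mathcal{R}$; (iii) $\mathbf{I}_{\mathcal{Q}}\mathbf{P}\mathbf{I}_{\mathcal{R}}=\mathbf{0}$.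 Moreover, if these conditions hold for every $\mathbf{P}\in\mathcal{P}\setminus\{\mathbf{P}_0\}$, then $V_\Upsilon\cap V_0^\perp$ is orthogonal to $V_\Gamma\cap V_0^\perp$ (where $V_0$ is the space of constant vectors), and for every $\upsilon\in\Upsilon$ and $\gamma\in\Gamma$ there exists $\omega\in\Omega$ with $f(\omega)=\upsilon$ and $g(\omega)=\gamma$.
   Context: $\mathbf{J}$ is the $n\times n$ all-ones matrix. $V_\Omega$ carries the standard inner product; all matrices are $\Omega\times\Omega$. An orthogonal decomposition of a subspace $W\le V_\Omega$ is a finite set of nonzero symmetric idempotent matrices that are mutually orthogonal and whose sum is the orthogonal projector onto $W$. For projectors $\mathbf{A},\mathbf{B}$: $\mathbf{B}$ has first-order balance in relation to $\mathbf{A}$ if $\mathbf{BAB}=\lambda_{\mathbf{AB}}\mathbf{B}$ for a scalar $\lambda_{\mathbf{AB}}$ (efficiency factor); if $\lambda_{\mathbf{AB}}\ne0$, $\mathbf{A}\vartriangleright\mathbf{B}=\lambda_{\mathbf{AB}}^{-1}\mathbf{ABA}$. $\mathcal{Q}$ is structure balanced in relation to $\mathcal{P}$ if every $\mathbf{Q}\in\mathcal{Q}$ has first-order balance in relation to every $\mathbf{P}\in\mathcal{P}$, and $\mathbf{Q}_1\mathbf{P}\mathbf{Q}_2=\mathbf{0}$ for all $\mathbf{P}\in\mathcal{P}$ and all distinct $\mathbf{Q}_1,\mathbf{Q}_2\in\mathcal{Q}$. *)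

theory Defs
  imports "HOL-Analysis.Analysis"
begin

text \<open>Matrices indexed by a finite type 'o (playing the role of Omega).\<close>

definition all_ones :: "real ^ 'o ^ 'o" where
  "all_ones = (\<chi> i j. 1)"

definition orth_proj_onto :: "real ^ 'o ^ 'o \<Rightarrow> (real ^ 'o) set \<Rightarrow> bool" where
  "orth_proj_onto M W \<longleftrightarrow> transpose M = M \<and> M ** M = M \<and> range (\<lambda>v. M *v v) = W"

definition orth_decomp :: "(real ^ 'o ^ 'o) set \<Rightarrow> (real ^ 'o) set \<Rightarrow> bool" where
  "orth_decomp D W \<longleftrightarrow> finite D \<and>
     (\<forall>A\<in>D. A \<noteq> 0 \<and> transpose A = A \<and> A ** A = A) \<and>
     (\<forall>A\<in>D. \<forall>B\<in>D. A \<noteq> B \<longrightarrow> A ** B = 0) \<and>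
     orth_proj_onto (\<Sum>A\<in>D. A) W"

definition first_order_balance :: "real ^ 'o ^ 'o \<Rightarrow> real ^ 'o ^ 'o \<Rightarrow> bool" where
  "first_order_balance B A \<longleftrightarrow> (\<exists>l. B ** A ** B = l *\<^sub>R B)"

text \<open>Efficiency factor lambda_AB (well defined when B is nonzero and balanced).\<close>
definition eff :: "real ^ 'o ^ 'o \<Rightarrow> real ^ 'o ^ 'o \<Rightarrow> real" where
  "eff A B = (SOME l. B ** A ** B = l *\<^sub>R B)"

definition tri :: "real ^ 'o ^ 'o \<Rightarrow> real ^ 'o ^ 'o \<Rightarrow> real ^ 'o ^ 'o" where
  "tri A B = (inverse (eff A B)) *\<^sub>R (A ** B ** A)"

definition structure_balanced :: "(real ^ 'o ^ 'o) set \<Rightarrow> (real ^ 'o ^ 'o) set \<Rightarrow> bool" where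
  "structure_balanced Q P \<longleftrightarrow>
     (\<forall>q\<in>Q. \<forall>p\<in>P. first_order_balance q p) \<and>
     (\<forall>p\<in>P. \<forall>q1\<in>Q. \<forall>q2\<in>Q. q1 \<noteq> q2 \<longrightarrow> q1 ** p ** q2 = 0)"

definition factor_space :: "('o \<Rightarrow> 'u) \<Rightarrow> (real ^ 'o) set" where
  "factor_space f = {v. \<forall>x y. f x = f y \<longrightarrow> v $ x = v $ y}"

definition const_space :: "(real ^ 'o) set" where
  "const_space = {v. \<forall>x y. v $ x = v $ y}"

definition orth_compl :: "(real ^ 'o) set \<Rightarrow> (real ^ 'o) set" where
  "orth_compl W = {v. \<forall>w\<in>W. inner v w = 0}"

end

theory Submission
  imports Defs
begin

text \<open>
  Everything rests on one positivity fact: for symmetric idempotents \<open>A\<close>, \<open>B\<close> and any \<open>S\<close>,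
  \<open>BABS = 0\<close> forces \<open>ABS = 0\<close>, because \<open>(ABS)\<^sup>T(ABS) = S\<^sup>T(BABS)\<close>. With \<open>S = I\<^sub>\<R>\<close> this turns
  \<open>(P \<rhd> Q) I\<^sub>\<R> = 0\<close> into \<open>QPI\<^sub>\<R> = 0\<close>, and the idempotents of a decomposition absorb its sum,
  so vanishing against \<open>I\<^sub>\<R>\<close> (or \<open>I\<^sub>\<Q>\<close>) is vanishing against each member.
  If (iii) holds for every \<open>P \<noteq> P\<^sub>0\<close>, expanding \<open>\<Sum>\<P> = 1\<close> gives \<open>I\<^sub>\<Q> I\<^sub>\<R> = P\<^sub>0\<close>, i.e.
  \<open>\<langle>x, y\<rangle> = \<langle>x, P\<^sub>0 y\<rangle>\<close> for \<open>x \<in> V\<^sub>\<Upsilon>\<close>, \<open>y \<in> V\<^sub>\<Gamma>\<close>. This vanishes on centred vectors, and for the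
  indicators of the fibres \<open>f\<^sup>-\<^sup>1(\<upsilon>)\<close>, \<open>g\<^sup>-\<^sup>1(\<gamma>)\<close> it equals \<open>|f\<^sup>-\<^sup>1(\<upsilon>)| |g\<^sup>-\<^sup>1(\<gamma>)| / n > 0\<close>,
  so the fibres meet.
\<close>

lemma sum_matrix_mult:
  "(\<Sum>x\<in>S. f x) ** (B :: 'a::semiring_1^'p^'n) = (\<Sum>x\<in>S. f x ** B)"
  by (induction S rule: infinite_finite_induct)
     (simp_all add: vec_eq_iff matrix_matrix_mult_def sum.distrib algebra_simps)

lemma matrix_mult_sum:
  "(A :: 'a::semiring_1^'n^'m) ** (\<Sum>x\<in>S. f x) = (\<Sum>x\<in>S. A ** f x)"
  by (induction S rule: infinite_finite_induct) (simp_all add: matrix_add_ldistrib)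

lemma transpose_mult_self_eq_0_iff:
  fixes M :: "real^'n^'m"
  shows "transpose M ** M = 0 \<longleftrightarrow> M = 0"
proof
  assume "transpose M ** M = 0"
  then have "(transpose M ** M) $ i $ i = 0" for i
    by simp
  then have "column i M = 0" for i
    by (simp add: matrix_mult_transpose_dot_column)
  then have "M $ j $ i = 0" for i j
    by (metis column_def vec_lambda_beta zero_index)
  then show "M = 0"
    by (simp add: vec_eq_iff)
qed simp

lemma inner_symmetric_matrix:
  fixes A :: "real^'n^'n"
  assumes "transpose A = A"
  shows "inner (A *v x) y = inner x (A *v y)"
proof -
  have "A *v x = x v* transpose A"
    by simp
  then show ?thesis
    using assms dot_lmul_matrix by metis
qed

lemma projection_sandwich_eq_0:
  fixes A B :: "real^'n^'n" and S :: "real^'m^'n"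
  assumes "transpose A = A" "A ** A = A" "transpose B = B" and "B ** A ** B ** S = 0"
  shows "A ** B ** S = 0"
proof -
  have "transpose (A ** B ** S) ** (A ** B ** S) = transpose S ** (B ** (A ** A) ** B ** S)"
    using assms(1,3) by (simp add: matrix_transpose_mul matrix_mul_assoc)
  also have "\<dots> = 0"
    using assms(2,4) by (simp add: matrix_mul_assoc)
  finally show ?thesis
    by (simp add: transpose_mult_self_eq_0_iff)
qed

lemma orth_decompD:
  assumes "orth_decomp D W"
  shows "finite D" and "\<And>A. A \<in> D \<Longrightarrow> transpose A = A" and "\<And>A. A \<in> D \<Longrightarrow> A ** A = A"
    and "\<And>A B. A \<in> D \<Longrightarrow> B \<in> D \<Longrightarrow> A \<noteq> B \<Longrightarrow> A ** B = 0"
    and "transpose (\<Sum>D) = \<Sum>D" and "\<Sum>D ** \<Sum>D = \<Sum>D" and "range (\<lambda>v. \<Sum>D *v v) = W"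
  using assms unfolding orth_decomp_def orth_proj_onto_def by auto

lemma orth_decomp_mult_sum:
  assumes "orth_decomp D W" "A \<in> D"
  shows "A ** \<Sum>D = A"
proof -
  note d = orth_decompD[OF assms(1)]
  have "A ** \<Sum>D = A ** A + (\<Sum>B\<in>D - {A}. A ** B)"
    using d(1) assms(2) matrix_mult_sum[of A "\<lambda>A. A" D] by (simp add: sum.remove)
  also have "(\<Sum>B\<in>D - {A}. A ** B) = 0"
    using d(4) assms(2) by (intro sum.neutral) auto
  finally show ?thesis
    using d(3) assms(2) by simp
qed

lemma orth_decomp_sum_mult:
  assumes "orth_decomp D W" "A \<in> D"
  shows "\<Sum>D ** A = A"
proof -
  have "\<Sum>D ** A = transpose (A ** \<Sum>D)"
    using orth_decompD(2,5)[OF assms(1)] assms(2) by (simp add: matrix_transpose_mul)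
  then show ?thesis
    using orth_decomp_mult_sum[OF assms] orth_decompD(2)[OF assms(1)] assms(2) by simp
qed

lemma mult_orth_decomp_sum_eq_0_iff:
  assumes "orth_decomp D W"
  shows "M ** \<Sum>D = 0 \<longleftrightarrow> (\<forall>A\<in>D. M ** A = 0)"
proof
  assume "M ** \<Sum>D = 0"
  show "\<forall>A\<in>D. M ** A = 0"
  proof
    fix A assume "A \<in> D"
    then have "M ** A = M ** \<Sum>D ** A"
      using orth_decomp_sum_mult[OF assms] by (simp add: matrix_mul_assoc[symmetric])
    then show "M ** A = 0"
      using \<open>M ** \<Sum>D = 0\<close> by simp
  qed
qed (simp add: matrix_mult_sum[of M "\<lambda>A. A" D])

lemma orth_decomp_sum_mult_eq_0_iff:
  assumes "orth_decomp D W"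
  shows "\<Sum>D ** M = 0 \<longleftrightarrow> (\<forall>A\<in>D. A ** M = 0)"
proof
  assume "\<Sum>D ** M = 0"
  show "\<forall>A\<in>D. A ** M = 0"
  proof
    fix A assume "A \<in> D"
    then have "A ** M = A ** (\<Sum>D ** M)"
      using orth_decomp_mult_sum[OF assms] by (simp add: matrix_mul_assoc)
    then show "A ** M = 0"
      using \<open>\<Sum>D ** M = 0\<close> by simp
  qed
qed (simp add: sum_matrix_mult[of "\<lambda>A. A" D])

lemma orth_decomp_sum_fixes:
  assumes "orth_decomp D W" "x \<in> W"
  shows "\<Sum>D *v x = x"
proof -
  obtain v where "x = \<Sum>D *v v"
    using orth_decompD(7)[OF assms(1)] assms(2) by auto
  then show ?thesis
    using orth_decompD(6)[OF assms(1)] by (simp add: matrix_vector_mul_assoc)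
qed

lemma orth_decomp_UNIV_sum:
  assumes "orth_decomp D (UNIV :: (real^'n) set)"
  shows "\<Sum>D = mat 1"
  using orth_decomp_sum_fixes[OF assms] by (simp add: matrix_eq)

lemma orth_decomp_UNIV_sandwich:
  assumes "orth_decomp D UNIV" "P\<^sub>0 \<in> D" and "\<forall>P\<in>D - {P\<^sub>0}. A ** P ** B = 0"
  shows "A ** B = A ** P\<^sub>0 ** B"
proof -
  have "A ** B = (\<Sum>P\<in>D. A ** P ** B)"
    using orth_decomp_UNIV_sum[OF assms(1)] matrix_mult_sum[of A "\<lambda>A. A" D] sum_matrix_mult[of "(**) A" D B]
    by simp
  also have "\<dots> = A ** P\<^sub>0 ** B"
    using assms(3) orth_decompD(1)[OF assms(1)] assms(2) by (simp add: sum.remove)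
  finally show ?thesis .
qed

lemma inner_orth_decomp_sums:
  assumes "orth_decomp QQ V" "orth_decomp RR W" "x \<in> V" "y \<in> W"
  shows "inner x y = inner x ((\<Sum>QQ ** \<Sum>RR) *v y)"
proof -
  have "inner x y = inner (\<Sum>QQ *v x) (\<Sum>RR *v y)"
    using orth_decomp_sum_fixes assms by metis
  also have "\<dots> = inner x (\<Sum>QQ *v (\<Sum>RR *v y))"
    by (rule inner_symmetric_matrix[OF orth_decompD(5)[OF assms(1)]])
  also have "\<dots> = inner x ((\<Sum>QQ ** \<Sum>RR) *v y)"
    by (simp add: matrix_vector_mul_assoc)
  finally show ?thesis .
qed

lemma first_order_balance_eff:
  assumes "first_order_balance Q P"
  shows "Q ** P ** Q = eff P Q *\<^sub>R Q"
  using assms unfolding first_order_balance_def eff_def by (rule someI_ex)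

lemma tri_mult_eq_0_iff:
  fixes P Q :: "real^'n^'n" and S :: "real^'m^'n"
  assumes "transpose P = P" "P ** P = P" "transpose Q = Q" "Q ** Q = Q"
    and "first_order_balance Q P"
  shows "(eff P Q \<noteq> 0 \<longrightarrow> tri P Q ** S = 0) \<longleftrightarrow> Q ** P ** S = 0"
proof
  assume tri: "eff P Q \<noteq> 0 \<longrightarrow> tri P Q ** S = 0"
  have "P ** Q ** P ** S = 0"
  proof (cases "eff P Q = 0")
    case True
    then have "Q ** P ** Q ** P = 0"
      using first_order_balance_eff[OF assms(5)] by simp
    then have "P ** Q ** P = 0"
      by (rule projection_sandwich_eq_0[OF assms(1-3)])
    then show ?thesis
      by simp
  next
    case False
    then show ?thesis
      using tri by (simp add: tri_def scalar_matrix_assoc[symmetric] matrix_mul_assoc)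
  qed
  then show "Q ** P ** S = 0"
    by (rule projection_sandwich_eq_0[OF assms(3,4,1)])
next
  assume "Q ** P ** S = 0"
  then have "P ** (Q ** P ** S) = 0"
    by simp
  then show "eff P Q \<noteq> 0 \<longrightarrow> tri P Q ** S = 0"
    by (simp add: tri_def scalar_matrix_assoc[symmetric] matrix_mul_assoc)
qed

lemma balanced_conditions_equiv:
  assumes dP: "orth_decomp PP UNIV" and dQ: "orth_decomp QQ (V :: (real^'n) set)"
    and dR: "orth_decomp RR W" and bal: "structure_balanced QQ PP" and P: "P \<in> PP"
  shows "((\<forall>Q\<in>QQ. eff P Q \<noteq> 0 \<longrightarrow> tri P Q ** (\<Sum>R\<in>RR. R) = 0)
            \<longleftrightarrow> (\<forall>Q\<in>QQ. \<forall>R\<in>RR. Q ** P ** R = 0))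
       \<and> ((\<forall>Q\<in>QQ. \<forall>R\<in>RR. Q ** P ** R = 0)
            \<longleftrightarrow> (\<Sum>Q\<in>QQ. Q) ** P ** (\<Sum>R\<in>RR. R) = 0)"
proof -
  have right: "Q ** P ** \<Sum>RR = 0 \<longleftrightarrow> (\<forall>R\<in>RR. Q ** P ** R = 0)" for Q
    by (rule mult_orth_decomp_sum_eq_0_iff[OF dR])
  have "(eff P Q \<noteq> 0 \<longrightarrow> tri P Q ** \<Sum>RR = 0) \<longleftrightarrow> Q ** P ** \<Sum>RR = 0" if "Q \<in> QQ" for Q
    using orth_decompD[OF dP] orth_decompD[OF dQ] P that bal
    by (intro tri_mult_eq_0_iff) (auto simp: structure_balanced_def)
  moreover have "\<Sum>QQ ** P ** \<Sum>RR = 0 \<longleftrightarrow> (\<forall>Q\<in>QQ. Q ** P ** \<Sum>RR = 0)"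
    using orth_decomp_sum_mult_eq_0_iff[OF dQ, of "P ** \<Sum>RR"] by (simp add: matrix_mul_assoc)
  ultimately show ?thesis
    by (simp add: right cong: ball_cong)
qed

abbreviation mean_proj :: "real^'o::finite^'o" where
  "mean_proj \<equiv> inverse (real CARD('o)) *\<^sub>R all_ones"

lemma mean_proj_mult_vec: "(mean_proj *v (y :: real^'o)) $ i = sum (($) y) UNIV / real CARD('o::finite)"
  by (simp add: all_ones_def matrix_vector_mult_def sum_divide_distrib field_simps)

lemma inner_mean_proj:
  "inner x (mean_proj *v (y :: real^'o)) = sum (($) x) UNIV * (sum (($) y) UNIV / real CARD('o::finite))"
  by (simp only: inner_vec_def inner_real_def mean_proj_mult_vec sum_distrib_right)

lemma mean_proj_const_space: "mean_proj *v y \<in> const_space"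
  by (simp add: const_space_def mean_proj_mult_vec)

lemma factor_spaces_centred_orthogonal:
  assumes "orth_decomp QQ (factor_space f)" "orth_decomp RR (factor_space g)"
    and "\<Sum>QQ ** \<Sum>RR = mean_proj"
    and "x \<in> factor_space f \<inter> orth_compl const_space" "y \<in> factor_space g \<inter> orth_compl const_space"
  shows "inner x y = 0"
proof -
  have "inner x y = inner x (mean_proj *v y)"
    using inner_orth_decomp_sums[OF assms(1,2)] assms(3-5) by simp
  also have "\<dots> = 0"
    using assms(4) mean_proj_const_space[of y] by (simp add: orth_compl_def)
  finally show ?thesis .
qed

lemma fibres_meet:
  fixes f :: "'o::finite \<Rightarrow> 'u" and g :: "'o \<Rightarrow> 'g"
  assumes "orth_decomp QQ (factor_space f)" "orth_decomp RR (factor_space g)"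
    and "\<Sum>QQ ** \<Sum>RR = mean_proj" and "u \<in> range f" "v \<in> range g"
  shows "\<exists>w. f w = u \<and> g w = v"
proof (rule ccontr)
  assume disjoint: "\<nexists>w. f w = u \<and> g w = v"
  define x :: "real^'o" where "x = (\<chi> w. if f w = u then 1 else 0)"
  define y :: "real^'o" where "y = (\<chi> w. if g w = v then 1 else 0)"
  have "x \<in> factor_space f" "y \<in> factor_space g"
    by (simp_all add: factor_space_def x_def y_def)
  then have "inner x y = inner x (mean_proj *v y)"
    using inner_orth_decomp_sums[OF assms(1,2)] assms(3) by metis
  moreover have "inner x y = 0"
    using disjoint unfolding inner_vec_def x_def y_def by (intro sum.neutral) auto
  moreover obtain a b where "f a = u" "g b = v"
    using assms(4,5) by auto
  then have "sum (($) x) UNIV > 0" "sum (($) y) UNIV > 0"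
    by (auto simp: x_def y_def intro!: sum_pos2)
  ultimately show False
    by (simp add: inner_mean_proj)
qed

theorem lemma1:
  fixes f :: "'o::finite \<Rightarrow> 'u::finite" and g :: "'o \<Rightarrow> 'g::finite"
    and PP QQ RR :: "(real ^ 'o ^ 'o) set"
  assumes "surj f" and "surj g"
    and "orth_decomp PP (UNIV :: (real ^ 'o) set)"
    and "orth_decomp QQ (factor_space f)"
    and "orth_decomp RR (factor_space g)"
    and "(inverse (real CARD('o))) *\<^sub>R all_ones \<in> PP"
    and "(inverse (real CARD('o))) *\<^sub>R all_ones \<in> QQ"
    and "(inverse (real CARD('o))) *\<^sub>R all_ones \<in> RR"
    and "structure_balanced QQ PP"
  shows "(\<forall>P \<in> PP - {(inverse (real CARD('o))) *\<^sub>R all_ones}.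
            ((\<forall>Q\<in>QQ. eff P Q \<noteq> 0 \<longrightarrow> tri P Q ** (\<Sum>R\<in>RR. R) = 0)
               \<longleftrightarrow> (\<forall>Q\<in>QQ. \<forall>R\<in>RR. Q ** P ** R = 0))
          \<and> ((\<forall>Q\<in>QQ. \<forall>R\<in>RR. Q ** P ** R = 0)
               \<longleftrightarrow> (\<Sum>Q\<in>QQ. Q) ** P ** (\<Sum>R\<in>RR. R) = 0))
       \<and> ((\<forall>P \<in> PP - {(inverse (real CARD('o))) *\<^sub>R all_ones}.
              (\<forall>Q\<in>QQ. eff P Q \<noteq> 0 \<longrightarrow> tri P Q ** (\<Sum>R\<in>RR. R) = 0)
            \<and> (\<forall>Q\<in>QQ. \<forall>R\<in>RR. Q ** P ** R = 0)
            \<and> (\<Sum>Q\<in>QQ. Q) ** P ** (\<Sum>R\<in>RR. R) = 0)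
          \<longrightarrow> (\<forall>x\<in>factor_space f \<inter> orth_compl const_space.
                 \<forall>y\<in>factor_space g \<inter> orth_compl const_space. inner x y = 0)
             \<and> (\<forall>u v. \<exists>w. f w = u \<and> g w = v))"
proof -
  note dP = assms(3) and dQ = assms(4) and dR = assms(5)
  have sums: "\<Sum>QQ ** \<Sum>RR = mean_proj" if "\<forall>P \<in> PP - {mean_proj}. \<Sum>QQ ** P ** \<Sum>RR = 0"
  proof -
    have "\<Sum>QQ ** \<Sum>RR = \<Sum>QQ ** mean_proj ** \<Sum>RR"
      by (rule orth_decomp_UNIV_sandwich[OF dP assms(6) that])
    also have "\<dots> = mean_proj"
      using orth_decomp_sum_mult[OF dQ assms(7)] orth_decomp_mult_sum[OF dR assms(8)]
      by (simp add: matrix_mul_assoc)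
    finally show ?thesis .
  qed
  show ?thesis
    apply (intro conjI impI)
    subgoal by (intro ballI balanced_conditions_equiv[OF dP dQ dR assms(9)]) simp
    subgoal by (intro ballI factor_spaces_centred_orthogonal[OF dQ dR sums]) auto
    subgoal using assms(1,2) by (intro allI fibres_meet[OF dQ dR sums]) auto
    done
qed

end
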